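(* Let $\mathbb E$ be a stiffly Mal'tsev category. Then (1) every object of $\mathbb E$ carrying an internal Mal'tsev structure is a subobject of $1$ (i.e. $X\to 1$ is a monomorphism); (2) every object of $\mathbb E$ carrying an internal group structure is isomorphic to $1$.
   Context: A finitely complete category is Mal'tsev if every internal reflexive relation is an equivalence relation. A pointed finitely complete category is unital if for all $X,Y$ the morphisms $(1_X,0):X\to X\times Y$ and $(0,1_Y):Y\to X\times Y$ are jointly strongly epic. In a unital category two subobjects $u:U\to X$, $v:V\to X$ commute if there exists a (necessarily unique) $\varphi:U\times V\to X$ with $\varphi\circ(1_U,0)=u$ and $\varphi\circ(0,1_V)=v$; a unital category is stiffly unital if whenever $u,v$ commute, $u\cap v$ is the zero subobject. For an object $Y$, $Pt_Y\mathbb E$ is the pointed category of split epimorphisms $f:A\to Y$ with chosen section $s$ ($fs=1_Y$), morphisms commuting with $f$'s and $s$'s; for $\mathbb E$ Mal'tsev each $Pt_Y\mathbb E$ is unital. $\mathbb E$ is stiffly Mal'tsev if it is Mal'tsev and every fiber $Pt_Y\mathbb E$ is stiffly unital. An internal Mal'tsev structure on $X$ is $p:X^3\to X$ with $p(x,y,y)=x=p(y,y,x)$. *)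

theory Defs
  imports Main
begin

record ('o, 'a) cat =
  Ob   :: "'o set"
  Ar   :: "'a set"
  Dom  :: "'a \<Rightarrow> 'o"
  Cod  :: "'a \<Rightarrow> 'o"
  Idm  :: "'o \<Rightarrow> 'a"
  Comp :: "'a \<Rightarrow> 'a \<Rightarrow> 'a"   (* Comp C g f = g \<circ> f *)

definition hom :: "('o,'a) cat \<Rightarrow> 'o \<Rightarrow> 'o \<Rightarrow> 'a set" where
  "hom C X Y = {f \<in> Ar C. Dom C f = X \<and> Cod C f = Y}"

definition is_category :: "('o,'a) cat \<Rightarrow> bool" where
  "is_category C \<longleftrightarrow>
     (\<forall>f \<in> Ar C. Dom C f \<in> Ob C \<and> Cod C f \<in> Ob C) \<and>
     (\<forall>X \<in> Ob C. Idm C X \<in> hom C X X) \<and>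
     (\<forall>f g. f \<in> Ar C \<and> g \<in> Ar C \<and> Cod C f = Dom C g \<longrightarrow>
        Comp C g f \<in> hom C (Dom C f) (Cod C g)) \<and>
     (\<forall>f \<in> Ar C. Comp C (Idm C (Cod C f)) f = f \<and> Comp C f (Idm C (Dom C f)) = f) \<and>
     (\<forall>f g h. f \<in> Ar C \<and> g \<in> Ar C \<and> h \<in> Ar C \<and> Cod C f = Dom C g \<and> Cod C g = Dom C h \<longrightarrow>
        Comp C h (Comp C g f) = Comp C (Comp C h g) f)"

definition mono :: "('o,'a) cat \<Rightarrow> 'a \<Rightarrow> bool" where
  "mono C m \<longleftrightarrow> m \<in> Ar C \<and>
     (\<forall>g h. g \<in> Ar C \<and> h \<in> Ar C \<and> Cod C g = Dom C m \<and> Cod C h = Dom C m \<and>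
        Dom C g = Dom C h \<and> Comp C m g = Comp C m h \<longrightarrow> g = h)"

definition iso :: "('o,'a) cat \<Rightarrow> 'a \<Rightarrow> bool" where
  "iso C f \<longleftrightarrow> f \<in> Ar C \<and>
     (\<exists>g \<in> hom C (Cod C f) (Dom C f). Comp C g f = Idm C (Dom C f) \<and> Comp C f g = Idm C (Cod C f))"

definition isomorphic :: "('o,'a) cat \<Rightarrow> 'o \<Rightarrow> 'o \<Rightarrow> bool" where
  "isomorphic C X Y \<longleftrightarrow> (\<exists>f \<in> hom C X Y. iso C f)"

definition terminal :: "('o,'a) cat \<Rightarrow> 'o \<Rightarrow> bool" where
  "terminal C T \<longleftrightarrow> T \<in> Ob C \<and> (\<forall>X \<in> Ob C. \<exists>!f. f \<in> hom C X T)"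

definition initial :: "('o,'a) cat \<Rightarrow> 'o \<Rightarrow> bool" where
  "initial C I \<longleftrightarrow> I \<in> Ob C \<and> (\<forall>X \<in> Ob C. \<exists>!f. f \<in> hom C I X)"

definition zero_obj :: "('o,'a) cat \<Rightarrow> 'o \<Rightarrow> bool" where
  "zero_obj C Z \<longleftrightarrow> initial C Z \<and> terminal C Z"

definition pointed :: "('o,'a) cat \<Rightarrow> bool" where
  "pointed C \<longleftrightarrow> (\<exists>Z. zero_obj C Z)"

definition zero_mor :: "('o,'a) cat \<Rightarrow> 'o \<Rightarrow> 'o \<Rightarrow> 'a \<Rightarrow> bool" where
  "zero_mor C X Y f \<longleftrightarrow>
     (\<exists>Z a b. zero_obj C Z \<and> a \<in> hom C X Z \<and> b \<in> hom C Z Y \<and> f = Comp C b a)"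

definition is_product :: "('o,'a) cat \<Rightarrow> 'o \<Rightarrow> 'o \<Rightarrow> 'o \<Rightarrow> 'a \<Rightarrow> 'a \<Rightarrow> bool" where
  "is_product C X Y P p q \<longleftrightarrow> P \<in> Ob C \<and> p \<in> hom C P X \<and> q \<in> hom C P Y \<and>
     (\<forall>Z f g. f \<in> hom C Z X \<and> g \<in> hom C Z Y \<longrightarrow>
        (\<exists>!h. h \<in> hom C Z P \<and> Comp C p h = f \<and> Comp C q h = g))"

definition pair :: "('o,'a) cat \<Rightarrow> 'o \<Rightarrow> 'a \<Rightarrow> 'a \<Rightarrow> 'a \<Rightarrow> 'a \<Rightarrow> 'a" where
  "pair C P p q f g = (THE h. h \<in> hom C (Dom C f) P \<and> Comp C p h = f \<and> Comp C q h = g)"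

definition is_product3 :: "('o,'a) cat \<Rightarrow> 'o \<Rightarrow> 'o \<Rightarrow> 'a \<Rightarrow> 'a \<Rightarrow> 'a \<Rightarrow> bool" where
  "is_product3 C X P p1 p2 p3 \<longleftrightarrow> P \<in> Ob C \<and> p1 \<in> hom C P X \<and> p2 \<in> hom C P X \<and> p3 \<in> hom C P X \<and>
     (\<forall>Z f g h. f \<in> hom C Z X \<and> g \<in> hom C Z X \<and> h \<in> hom C Z X \<longrightarrow>
        (\<exists>!k. k \<in> hom C Z P \<and> Comp C p1 k = f \<and> Comp C p2 k = g \<and> Comp C p3 k = h))"

definition tuple3 :: "('o,'a) cat \<Rightarrow> 'o \<Rightarrow> 'a \<Rightarrow> 'a \<Rightarrow> 'a \<Rightarrow> 'a \<Rightarrow> 'a \<Rightarrow> 'a \<Rightarrow> 'a" where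
  "tuple3 C P p1 p2 p3 f g h =
     (THE k. k \<in> hom C (Dom C f) P \<and> Comp C p1 k = f \<and> Comp C p2 k = g \<and> Comp C p3 k = h)"

definition is_pullback :: "('o,'a) cat \<Rightarrow> 'a \<Rightarrow> 'a \<Rightarrow> 'o \<Rightarrow> 'a \<Rightarrow> 'a \<Rightarrow> bool" where
  "is_pullback C f g P p q \<longleftrightarrow> f \<in> Ar C \<and> g \<in> Ar C \<and> Cod C f = Cod C g \<and> P \<in> Ob C \<and>
     p \<in> hom C P (Dom C f) \<and> q \<in> hom C P (Dom C g) \<and> Comp C f p = Comp C g q \<and>
     (\<forall>W a b. a \<in> hom C W (Dom C f) \<and> b \<in> hom C W (Dom C g) \<and> Comp C f a = Comp C g b \<longrightarrow>
        (\<exists>!h. h \<in> hom C W P \<and> Comp C p h = a \<and> Comp C q h = b))"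

definition finitely_complete :: "('o,'a) cat \<Rightarrow> bool" where
  "finitely_complete C \<longleftrightarrow> is_category C \<and> (\<exists>T. terminal C T) \<and>
     (\<forall>f g. f \<in> Ar C \<and> g \<in> Ar C \<and> Cod C f = Cod C g \<longrightarrow> (\<exists>P p q. is_pullback C f g P p q))"

definition jointly_monic :: "('o,'a) cat \<Rightarrow> 'a \<Rightarrow> 'a \<Rightarrow> bool" where
  "jointly_monic C r1 r2 \<longleftrightarrow> r1 \<in> Ar C \<and> r2 \<in> Ar C \<and> Dom C r1 = Dom C r2 \<and>
     (\<forall>g h. g \<in> Ar C \<and> h \<in> Ar C \<and> Cod C g = Dom C r1 \<and> Cod C h = Dom C r1 \<and> Dom C g = Dom C h \<and>
        Comp C r1 g = Comp C r1 h \<and> Comp C r2 g = Comp C r2 h \<longrightarrow> g = h)"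

definition internal_relation :: "('o,'a) cat \<Rightarrow> 'o \<Rightarrow> 'o \<Rightarrow> 'a \<Rightarrow> 'a \<Rightarrow> bool" where
  "internal_relation C X R r1 r2 \<longleftrightarrow> r1 \<in> hom C R X \<and> r2 \<in> hom C R X \<and> jointly_monic C r1 r2"

definition rel_reflexive :: "('o,'a) cat \<Rightarrow> 'o \<Rightarrow> 'o \<Rightarrow> 'a \<Rightarrow> 'a \<Rightarrow> bool" where
  "rel_reflexive C X R r1 r2 \<longleftrightarrow>
     (\<exists>d \<in> hom C X R. Comp C r1 d = Idm C X \<and> Comp C r2 d = Idm C X)"

definition rel_symmetric :: "('o,'a) cat \<Rightarrow> 'o \<Rightarrow> 'o \<Rightarrow> 'a \<Rightarrow> 'a \<Rightarrow> bool" where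
  "rel_symmetric C X R r1 r2 \<longleftrightarrow>
     (\<exists>s \<in> hom C R R. Comp C r1 s = r2 \<and> Comp C r2 s = r1)"

definition rel_transitive :: "('o,'a) cat \<Rightarrow> 'o \<Rightarrow> 'o \<Rightarrow> 'a \<Rightarrow> 'a \<Rightarrow> bool" where
  "rel_transitive C X R r1 r2 \<longleftrightarrow>
     (\<forall>P p q. is_pullback C r2 r1 P p q \<longrightarrow>
        (\<exists>t \<in> hom C P R. Comp C r1 t = Comp C r1 p \<and> Comp C r2 t = Comp C r2 q))"

definition rel_equivalence :: "('o,'a) cat \<Rightarrow> 'o \<Rightarrow> 'o \<Rightarrow> 'a \<Rightarrow> 'a \<Rightarrow> bool" where
  "rel_equivalence C X R r1 r2 \<longleftrightarrow>
     rel_reflexive C X R r1 r2 \<and> rel_symmetric C X R r1 r2 \<and> rel_transitive C X R r1 r2"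

definition maltsev :: "('o,'a) cat \<Rightarrow> bool" where
  "maltsev C \<longleftrightarrow> finitely_complete C \<and>
     (\<forall>X R r1 r2. X \<in> Ob C \<and> internal_relation C X R r1 r2 \<and> rel_reflexive C X R r1 r2 \<longrightarrow>
        rel_equivalence C X R r1 r2)"

definition jointly_epic :: "('o,'a) cat \<Rightarrow> 'a \<Rightarrow> 'a \<Rightarrow> bool" where
  "jointly_epic C u v \<longleftrightarrow> u \<in> Ar C \<and> v \<in> Ar C \<and> Cod C u = Cod C v \<and>
     (\<forall>g h. g \<in> Ar C \<and> h \<in> Ar C \<and> Dom C g = Cod C u \<and> Dom C h = Cod C u \<and> Cod C g = Cod C h \<and>
        Comp C g u = Comp C h u \<and> Comp C g v = Comp C h v \<longrightarrow> g = h)"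

definition jointly_strongly_epic :: "('o,'a) cat \<Rightarrow> 'a \<Rightarrow> 'a \<Rightarrow> bool" where
  "jointly_strongly_epic C u v \<longleftrightarrow> jointly_epic C u v \<and>
     (\<forall>M Z m g a b. mono C m \<and> m \<in> hom C M Z \<and> g \<in> hom C (Cod C u) Z \<and>
        a \<in> hom C (Dom C u) M \<and> b \<in> hom C (Dom C v) M \<and>
        Comp C m a = Comp C g u \<and> Comp C m b = Comp C g v \<longrightarrow>
        (\<exists>!d. d \<in> hom C (Cod C u) M \<and> Comp C d u = a \<and> Comp C d v = b \<and> Comp C m d = g))"

definition is_inj1 :: "('o,'a) cat \<Rightarrow> 'o \<Rightarrow> 'o \<Rightarrow> 'o \<Rightarrow> 'a \<Rightarrow> 'a \<Rightarrow> 'a \<Rightarrow> bool" where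
  "is_inj1 C X Y P p q i \<longleftrightarrow> i \<in> hom C X P \<and> Comp C p i = Idm C X \<and> zero_mor C X Y (Comp C q i)"

definition is_inj2 :: "('o,'a) cat \<Rightarrow> 'o \<Rightarrow> 'o \<Rightarrow> 'o \<Rightarrow> 'a \<Rightarrow> 'a \<Rightarrow> 'a \<Rightarrow> bool" where
  "is_inj2 C X Y P p q i \<longleftrightarrow> i \<in> hom C Y P \<and> zero_mor C Y X (Comp C p i) \<and> Comp C q i = Idm C Y"

definition unital :: "('o,'a) cat \<Rightarrow> bool" where
  "unital C \<longleftrightarrow> finitely_complete C \<and> pointed C \<and>
     (\<forall>X Y P p q i1 i2. X \<in> Ob C \<and> Y \<in> Ob C \<and> is_product C X Y P p q \<and>
        is_inj1 C X Y P p q i1 \<and> is_inj2 C X Y P p q i2 \<longrightarrow> jointly_strongly_epic C i1 i2)"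

definition commute :: "('o,'a) cat \<Rightarrow> 'a \<Rightarrow> 'a \<Rightarrow> bool" where
  "commute C u v \<longleftrightarrow>
     (\<exists>P p q i1 i2 phi. is_product C (Dom C u) (Dom C v) P p q \<and>
        is_inj1 C (Dom C u) (Dom C v) P p q i1 \<and> is_inj2 C (Dom C u) (Dom C v) P p q i2 \<and>
        phi \<in> hom C P (Cod C u) \<and> Comp C phi i1 = u \<and> Comp C phi i2 = v)"

definition stiffly_unital :: "('o,'a) cat \<Rightarrow> bool" where
  "stiffly_unital C \<longleftrightarrow> unital C \<and>
     (\<forall>u v. mono C u \<and> mono C v \<and> Cod C u = Cod C v \<and> commute C u v \<longrightarrow>
        (\<forall>P p q. is_pullback C u v P p q \<longrightarrow> zero_obj C P))"

type_synonym ('o,'a) pt_obj = "'o \<times> 'a \<times> 'a"    (* (A, f, s) with f : A \<rightarrow> Y, f s = 1_Y *)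
type_synonym ('o,'a) pt_arr = "('o,'a) pt_obj \<times> ('o,'a) pt_obj \<times> 'a"

definition Pt :: "('o,'a) cat \<Rightarrow> 'o \<Rightarrow> (('o,'a) pt_obj, ('o,'a) pt_arr) cat" where
  "Pt C Y =
     \<lparr> Ob = {(A, f, s). f \<in> hom C A Y \<and> s \<in> hom C Y A \<and> Comp C f s = Idm C Y},
       Ar = {(a, b, h). a \<in> {(A, f, s). f \<in> hom C A Y \<and> s \<in> hom C Y A \<and> Comp C f s = Idm C Y} \<and>
                        b \<in> {(A, f, s). f \<in> hom C A Y \<and> s \<in> hom C Y A \<and> Comp C f s = Idm C Y} \<and>
                        h \<in> hom C (fst a) (fst b) \<and>
                        Comp C (fst (snd b)) h = fst (snd a) \<and>
                        Comp C h (snd (snd a)) = snd (snd b)},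
       Dom = (\<lambda>(a, b, h). a),
       Cod = (\<lambda>(a, b, h). b),
       Idm = (\<lambda>a. (a, a, Idm C (fst a))),
       Comp = (\<lambda>(b, c, g) (a, b', h). (a, c, Comp C g h)) \<rparr>"

definition stiffly_maltsev :: "('o,'a) cat \<Rightarrow> bool" where
  "stiffly_maltsev C \<longleftrightarrow> maltsev C \<and> (\<forall>Y \<in> Ob C. stiffly_unital (Pt C Y))"

definition has_internal_maltsev :: "('o,'a) cat \<Rightarrow> 'o \<Rightarrow> bool" where
  "has_internal_maltsev C X \<longleftrightarrow>
     (\<exists>P p1 p2 p3 m. is_product3 C X P p1 p2 p3 \<and> m \<in> hom C P X \<and>
        (\<forall>T x y. x \<in> hom C T X \<and> y \<in> hom C T X \<longrightarrow>
           Comp C m (tuple3 C P p1 p2 p3 x y y) = x \<and>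
           Comp C m (tuple3 C P p1 p2 p3 y y x) = x))"

definition has_internal_group :: "('o,'a) cat \<Rightarrow> 'o \<Rightarrow> bool" where
  "has_internal_group C X \<longleftrightarrow>
     (\<exists>P p q m one e i. is_product C X X P p q \<and> terminal C one \<and>
        m \<in> hom C P X \<and> e \<in> hom C one X \<and> i \<in> hom C X X \<and>
        (let mul = (\<lambda>x y. Comp C m (pair C P p q x y));
             unit = (\<lambda>T. Comp C e (THE t. t \<in> hom C T one)) in
         \<forall>T x y z. x \<in> hom C T X \<and> y \<in> hom C T X \<and> z \<in> hom C T X \<longrightarrow>
           mul (mul x y) z = mul x (mul y z) \<and>
           mul x (unit T) = x \<and> mul (unit T) x = x \<and>
           mul x (Comp C i x) = unit T \<and> mul (Comp C i x) x = unit T))"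

end

theory Submission
  imports Defs
begin

text \<open>
  In a stiffly unital category an object \<open>A\<close> carrying a unitary magma structure
  \<open>\<phi> : A \<times> A \<rightarrow> A\<close> (\<open>\<phi> i\<^sub>1 = 1 = \<phi> i\<^sub>2\<close>) is a zero object: \<open>\<phi>\<close> witnesses that
  \<open>1\<^sub>A\<close> commutes with itself, so \<open>1\<^sub>A \<inter> 1\<^sub>A = A\<close> is zero. In the fibre \<open>Pt\<^sub>Y\<close> the square
  of a point \<open>(A, f, s)\<close> is the kernel pair of \<open>f\<close>, and the point is a zero object
  exactly when \<open>s f = 1\<^sub>A\<close>.

  A Mal'tsev operation \<open>m\<close> on \<open>X\<close> makes the point \<open>(X \<times> X, \<pi>\<^sub>1, \<Delta>)\<close> over \<open>X\<close> a unitary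
  magma via \<open>(x, y, z) \<mapsto> (x, m(y, x, z))\<close>; hence \<open>\<Delta> \<pi>\<^sub>1 = 1\<close>, the two projections of
  the kernel pair of \<open>X \<rightarrow> 1\<close> coincide, and \<open>X \<rightarrow> 1\<close> is monic. A group structure makes
  the point \<open>(X, X \<rightarrow> 1, e)\<close> over \<open>1\<close> a unitary magma via the multiplication; hence
  \<open>e \<circ> (X \<rightarrow> 1) = 1\<^sub>X\<close> and \<open>X \<cong> 1\<close>.
\<close>

lemma cat_comp:
  assumes "is_category C" "f \<in> hom C X Y" "g \<in> hom C Y Z"
  shows "Comp C g f \<in> hom C X Z"
  using assms unfolding is_category_def hom_def by force

lemma cat_id:
  assumes "is_category C" "X \<in> Ob C"
  shows "Idm C X \<in> hom C X X"
  using assms unfolding is_category_def by blast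

lemma cat_ob:
  assumes "is_category C" "f \<in> hom C X Y"
  shows "X \<in> Ob C" "Y \<in> Ob C"
  using assms unfolding is_category_def hom_def by auto

lemma cat_idl:
  assumes "is_category C" "f \<in> hom C X Y"
  shows "Comp C (Idm C Y) f = f"
  using assms unfolding is_category_def hom_def by auto

lemma cat_idr:
  assumes "is_category C" "f \<in> hom C X Y"
  shows "Comp C f (Idm C X) = f"
  using assms unfolding is_category_def hom_def by auto

lemma cat_assoc:
  assumes "is_category C" "f \<in> hom C X Y" "g \<in> hom C Y Z" "h \<in> hom C Z W"
  shows "Comp C h (Comp C g f) = Comp C (Comp C h g) f"
  using assms unfolding is_category_def hom_def by auto

lemma mono_Idm:
  assumes "is_category C" "X \<in> Ob C"
  shows "mono C (Idm C X)"
proof -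
  have idX: "Idm C X \<in> hom C X X" by (rule cat_id[OF assms])
  then have dom: "Dom C (Idm C X) = X" by (simp add: hom_def)
  have idl: "Comp C (Idm C X) g = g" if "g \<in> Ar C" "Cod C g = X" for g
    using cat_idl[OF assms(1)] that unfolding hom_def by blast
  show ?thesis
    unfolding mono_def dom using idX idl by (simp add: hom_def) metis
qed

lemma is_pullback_Idm_Idm:
  assumes "is_category C" "X \<in> Ob C"
  shows "is_pullback C (Idm C X) (Idm C X) X (Idm C X) (Idm C X)"
proof -
  have idX: "Idm C X \<in> hom C X X" by (rule cat_id[OF assms])
  then have dom: "Dom C (Idm C X) = X" by (simp add: hom_def)
  have idl: "\<And>h W. h \<in> hom C W X \<Longrightarrow> Comp C (Idm C X) h = h"
    using cat_idl[OF assms(1)] by blast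
  show ?thesis
    unfolding is_pullback_def dom
  proof (intro conjI allI impI)
    fix W a b
    assume "a \<in> hom C W X \<and> b \<in> hom C W X \<and> Comp C (Idm C X) a = Comp C (Idm C X) b"
    then show "\<exists>!h. h \<in> hom C W X \<and> Comp C (Idm C X) h = a \<and> Comp C (Idm C X) h = b"
      using idl by (intro ex1I[of _ a]) auto
  qed (use idX assms(2) in \<open>auto simp: hom_def\<close>)
qed

lemma terminal_uniq:
  assumes "is_category C" "terminal C T" "f \<in> hom C X T" "g \<in> hom C X T"
  shows "f = g"
  using assms cat_ob[OF assms(1,3)] unfolding terminal_def by blast

lemma terminal_ex:
  assumes "terminal C T" "X \<in> Ob C"
  obtains f where "f \<in> hom C X T"
  using assms unfolding terminal_def by blast

lemma terminal_endo_eq_Idm: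
  assumes "is_category C" "terminal C T" "h \<in> hom C T T"
  shows "h = Idm C T"
proof -
  have "T \<in> Ob C" using assms(2) by (simp add: terminal_def)
  from terminal_uniq[OF assms cat_id[OF assms(1) this]] show ?thesis .
qed


lemma pair_props:
  assumes "is_product C X Y P p q" "f \<in> hom C Z X" "g \<in> hom C Z Y"
  shows "pair C P p q f g \<in> hom C Z P" "Comp C p (pair C P p q f g) = f"
    "Comp C q (pair C P p q f g) = g"
proof -
  have ex: "\<exists>!h. h \<in> hom C Z P \<and> Comp C p h = f \<and> Comp C q h = g"
    using assms unfolding is_product_def by blast
  have dom: "Dom C f = Z" using assms(2) by (simp add: hom_def)
  have "pair C P p q f g \<in> hom C Z P \<and> Comp C p (pair C P p q f g) = f \<and>
      Comp C q (pair C P p q f g) = g"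
    unfolding pair_def dom by (rule theI'[OF ex])
  then show "pair C P p q f g \<in> hom C Z P" "Comp C p (pair C P p q f g) = f"
    "Comp C q (pair C P p q f g) = g"
    by auto
qed

lemma product_arrow_eq:
  assumes "is_category C" "is_product C X Y P p q" "h \<in> hom C Z P" "k \<in> hom C Z P"
    "Comp C p h = Comp C p k" "Comp C q h = Comp C q k"
  shows "h = k"
proof -
  have "p \<in> hom C P X" "q \<in> hom C P Y" using assms(2) unfolding is_product_def by auto
  then have "Comp C p h \<in> hom C Z X" "Comp C q h \<in> hom C Z Y"
    using cat_comp[OF assms(1) assms(3)] by auto
  then have "\<exists>!h'. h' \<in> hom C Z P \<and> Comp C p h' = Comp C p h \<and> Comp C q h' = Comp C q h"
    using assms(2) unfolding is_product_def by blast
  moreover have "h \<in> hom C Z P \<and> Comp C p h = Comp C p h \<and> Comp C q h = Comp C q h"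
    "k \<in> hom C Z P \<and> Comp C p k = Comp C p h \<and> Comp C q k = Comp C q h"
    using assms(3-6) by auto
  ultimately show ?thesis by (metis (no_types, lifting))
qed

lemma pair_unique:
  assumes "is_category C" "is_product C X Y P p q" "h \<in> hom C Z P"
    "Comp C p h = f" "Comp C q h = g"
  shows "pair C P p q f g = h"
proof -
  have "p \<in> hom C P X" "q \<in> hom C P Y" using assms(2) unfolding is_product_def by auto
  then have "f \<in> hom C Z X" "g \<in> hom C Z Y"
    using cat_comp[OF assms(1) assms(3)] assms(4,5) by auto
  from pair_props[OF assms(2) this] show ?thesis
    using product_arrow_eq[OF assms(1,2) _ assms(3)] assms(4,5) by metis
qed

lemma pair_comp:
  assumes "is_category C" "is_product C X Y P p q" "f \<in> hom C Z X" "g \<in> hom C Z Y"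
    "k \<in> hom C W Z"
  shows "Comp C (pair C P p q f g) k = pair C P p q (Comp C f k) (Comp C g k)"
proof -
  have p: "p \<in> hom C P X" and q: "q \<in> hom C P Y"
    using assms(2) unfolding is_product_def by auto
  note pq = pair_props[OF assms(2-4)]
  show ?thesis
    by (rule pair_unique[OF assms(1,2) cat_comp[OF assms(1,5) pq(1)], symmetric])
      (use cat_assoc[OF assms(1,5) pq(1) p] cat_assoc[OF assms(1,5) pq(1) q] pq in auto)
qed

lemma pair_proj:
  assumes "is_category C" "is_product C X Y P p q"
  shows "pair C P p q p q = Idm C P"
proof -
  have P: "P \<in> Ob C" and p: "p \<in> hom C P X" and q: "q \<in> hom C P Y"
    using assms(2) unfolding is_product_def by auto
  show ?thesis
    by (rule pair_unique[OF assms cat_id[OF assms(1) P]])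
      (use cat_idr[OF assms(1)] p q in auto)
qed

lemma tuple3_props:
  assumes "is_product3 C X P p1 p2 p3" "f \<in> hom C Z X" "g \<in> hom C Z X" "h \<in> hom C Z X"
  shows "tuple3 C P p1 p2 p3 f g h \<in> hom C Z P" "Comp C p1 (tuple3 C P p1 p2 p3 f g h) = f"
    "Comp C p2 (tuple3 C P p1 p2 p3 f g h) = g" "Comp C p3 (tuple3 C P p1 p2 p3 f g h) = h"
proof -
  have ex: "\<exists>!k. k \<in> hom C Z P \<and> Comp C p1 k = f \<and> Comp C p2 k = g \<and> Comp C p3 k = h"
    using assms unfolding is_product3_def by blast
  have dom: "Dom C f = Z" using assms(2) by (simp add: hom_def)
  have "tuple3 C P p1 p2 p3 f g h \<in> hom C Z P \<and>
      Comp C p1 (tuple3 C P p1 p2 p3 f g h) = f \<and> Comp C p2 (tuple3 C P p1 p2 p3 f g h) = g \<and>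
      Comp C p3 (tuple3 C P p1 p2 p3 f g h) = h"
    unfolding tuple3_def dom by (rule theI'[OF ex])
  then show "tuple3 C P p1 p2 p3 f g h \<in> hom C Z P" "Comp C p1 (tuple3 C P p1 p2 p3 f g h) = f"
    "Comp C p2 (tuple3 C P p1 p2 p3 f g h) = g" "Comp C p3 (tuple3 C P p1 p2 p3 f g h) = h"
    by auto
qed

lemma tuple3_unique:
  assumes "is_category C" "is_product3 C X P p1 p2 p3" "k \<in> hom C Z P"
    "Comp C p1 k = f" "Comp C p2 k = g" "Comp C p3 k = h"
  shows "tuple3 C P p1 p2 p3 f g h = k"
proof -
  have "p1 \<in> hom C P X" "p2 \<in> hom C P X" "p3 \<in> hom C P X"
    using assms(2) unfolding is_product3_def by auto
  then have fgh: "f \<in> hom C Z X" "g \<in> hom C Z X" "h \<in> hom C Z X"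
    using cat_comp[OF assms(1) assms(3)] assms(4-6) by auto
  then have "\<exists>!k. k \<in> hom C Z P \<and> Comp C p1 k = f \<and> Comp C p2 k = g \<and> Comp C p3 k = h"
    using assms(2) unfolding is_product3_def by blast
  then show ?thesis using tuple3_props[OF assms(2) fgh] assms(3-6) by blast
qed

lemma tuple3_comp:
  assumes "is_category C" "is_product3 C X P p1 p2 p3"
    "f \<in> hom C Z X" "g \<in> hom C Z X" "h \<in> hom C Z X" "k \<in> hom C W Z"
  shows "Comp C (tuple3 C P p1 p2 p3 f g h) k =
    tuple3 C P p1 p2 p3 (Comp C f k) (Comp C g k) (Comp C h k)"
proof -
  have p: "p1 \<in> hom C P X" "p2 \<in> hom C P X" "p3 \<in> hom C P X"
    using assms(2) unfolding is_product3_def by auto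
  note t = tuple3_props[OF assms(2-5)]
  show ?thesis
    by (rule tuple3_unique[OF assms(1,2) cat_comp[OF assms(1,6) t(1)], symmetric])
      (use cat_assoc[OF assms(1,6) t(1)] p t in auto)
qed

lemma pullback_arrow_eq:
  assumes "is_category C" "is_pullback C f g P p q" "h \<in> hom C W P" "k \<in> hom C W P"
    "Comp C p h = Comp C p k" "Comp C q h = Comp C q k"
  shows "h = k"
proof -
  have p: "p \<in> hom C P (Dom C f)" and q: "q \<in> hom C P (Dom C g)"
    and f: "f \<in> hom C (Dom C f) (Cod C f)" and g: "g \<in> hom C (Dom C g) (Cod C f)"
    and fg: "Comp C f p = Comp C g q"
    using assms(2) unfolding is_pullback_def hom_def by auto
  have "Comp C f (Comp C p h) = Comp C g (Comp C q h)"
    using cat_assoc[OF assms(1,3) p f] cat_assoc[OF assms(1,3) q g] fg by simp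
  moreover have "Comp C p h \<in> hom C W (Dom C f)" "Comp C q h \<in> hom C W (Dom C g)"
    using cat_comp[OF assms(1,3)] p q by auto
  ultimately have "\<exists>!h'. h' \<in> hom C W P \<and> Comp C p h' = Comp C p h \<and> Comp C q h' = Comp C q h"
    using assms(2) unfolding is_pullback_def by blast
  moreover have "h \<in> hom C W P \<and> Comp C p h = Comp C p h \<and> Comp C q h = Comp C q h"
    "k \<in> hom C W P \<and> Comp C p k = Comp C p h \<and> Comp C q k = Comp C q h"
    using assms(3-6) by auto
  ultimately show ?thesis by (metis (no_types, lifting))
qed

lemma pullback_over_terminal_iff_product:
  assumes "is_category C" "terminal C T" "f \<in> hom C X T" "g \<in> hom C Y T"
  shows "is_pullback C f g P p q \<longleftrightarrow> is_product C X Y P p q"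
proof -
  have dom: "Dom C f = X" "Dom C g = Y" and fg: "f \<in> Ar C" "g \<in> Ar C" "Cod C f = Cod C g"
    using assms(3,4) by (auto simp: hom_def)
  have fa_gb: "Comp C f a = Comp C g b" if "a \<in> hom C W X" "b \<in> hom C W Y" for W a b
    using terminal_uniq[OF assms(1,2) cat_comp[OF assms(1) that(1) assms(3)]
        cat_comp[OF assms(1) that(2) assms(4)]] .
  let ?U = "\<lambda>W a b. \<exists>!h. h \<in> hom C W P \<and> Comp C p h = a \<and> Comp C q h = b"
  have "(\<forall>W a b. a \<in> hom C W X \<and> b \<in> hom C W Y \<and> Comp C f a = Comp C g b \<longrightarrow> ?U W a b)
      \<longleftrightarrow> (\<forall>W a b. a \<in> hom C W X \<and> b \<in> hom C W Y \<longrightarrow> ?U W a b)"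
    using fa_gb by blast
  moreover have "p \<in> hom C P X \<Longrightarrow> q \<in> hom C P Y \<Longrightarrow> Comp C f p = Comp C g q"
    by (rule fa_gb)
  ultimately show ?thesis
    unfolding is_pullback_def is_product_def dom using fg by (intro iffI; elim conjE; simp)
qed

lemma mono_if_kernel_pair_projections_eq:
  assumes "is_pullback C t t P p p"
  shows "mono C t"
  unfolding mono_def
proof (intro conjI allI impI)
  show "t \<in> Ar C" using assms by (simp add: is_pullback_def)
  fix g h
  assume gh: "g \<in> Ar C \<and> h \<in> Ar C \<and> Cod C g = Dom C t \<and> Cod C h = Dom C t \<and>
    Dom C g = Dom C h \<and> Comp C t g = Comp C t h"
  then have "g \<in> hom C (Dom C g) (Dom C t)" "h \<in> hom C (Dom C g) (Dom C t)"
    by (auto simp: hom_def)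
  with gh obtain w where "Comp C p w = g" "Comp C p w = h"
    using assms unfolding is_pullback_def by blast
  then show "g = h" by simp
qed

lemma stiffly_unital_unitary_magma_zero_obj:
  assumes su: "stiffly_unital D" and prod: "is_product D A A B pa pb"
    and i1: "is_inj1 D A A B pa pb i1" and i2: "is_inj2 D A A B pa pb i2"
    and phi: "phi \<in> hom D B A" "Comp D phi i1 = Idm D A" "Comp D phi i2 = Idm D A"
  shows "zero_obj D A"
proof -
  have cat: "is_category D"
    using su unfolding stiffly_unital_def unital_def finitely_complete_def by blast
  have A: "A \<in> Ob D" using prod cat_ob(2)[OF cat] unfolding is_product_def by blast
  have idA: "Idm D A \<in> hom D A A" by (rule cat_id[OF cat A])
  then have dom: "Dom D (Idm D A) = A" "Cod D (Idm D A) = A" by (auto simp: hom_def)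
  have "commute D (Idm D A) (Idm D A)"
    unfolding commute_def dom using prod i1 i2 phi by blast
  then show ?thesis
    using su mono_Idm[OF cat A] is_pullback_Idm_Idm[OF cat A] unfolding stiffly_unital_def by blast
qed

lemma Pt_Ob_iff:
  "(A, f, s) \<in> Ob (Pt C Y) \<longleftrightarrow> f \<in> hom C A Y \<and> s \<in> hom C Y A \<and> Comp C f s = Idm C Y"
  by (simp add: Pt_def)

lemma Pt_hom_iff:
  "((A, f, s), (B, g, r), h) \<in> hom (Pt C Y) (A, f, s) (B, g, r) \<longleftrightarrow>
     (A, f, s) \<in> Ob (Pt C Y) \<and> (B, g, r) \<in> Ob (Pt C Y) \<and>
     h \<in> hom C A B \<and> Comp C g h = f \<and> Comp C h s = r"
  by (simp add: Pt_def hom_def)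

lemma Pt_homE:
  assumes "x \<in> hom (Pt C Y) a b"
  obtains h where "x = (a, b, h)"
  using assms by (cases x) (auto simp: Pt_def hom_def)

lemma Pt_Comp: "Comp (Pt C Y) (b, c, g) (a, b', h) = (a, c, Comp C g h)"
  by (simp add: Pt_def)

lemma Pt_Idm: "Idm (Pt C Y) a = (a, a, Idm C (fst a))"
  by (simp add: Pt_def)

lemma Pt_zero_obj:
  assumes cat: "is_category C" and Y: "Y \<in> Ob C"
  shows "zero_obj (Pt C Y) (Y, Idm C Y, Idm C Y)"
proof -
  let ?Z = "(Y, Idm C Y, Idm C Y)"
  have idY: "Idm C Y \<in> hom C Y Y" by (rule cat_id[OF cat Y])
  have Z: "?Z \<in> Ob (Pt C Y)" unfolding Pt_Ob_iff using idY cat_idl[OF cat idY] by blast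
  have "\<exists>!x. x \<in> hom (Pt C Y) ?Z a" and "\<exists>!x. x \<in> hom (Pt C Y) a ?Z"
    if a: "a \<in> Ob (Pt C Y)" for a
  proof -
    obtain A f s where a_def: "a = (A, f, s)" by (cases a)
    have f: "f \<in> hom C A Y" and s: "s \<in> hom C Y A" and fs: "Comp C f s = Idm C Y"
      using a unfolding a_def Pt_Ob_iff by auto
    have "x = (?Z, a, s)" if x: "x \<in> hom (Pt C Y) ?Z a" for x
    proof -
      obtain h where xh: "x = (?Z, a, h)" using x by (rule Pt_homE)
      with x have "h \<in> hom C Y A" "Comp C h (Idm C Y) = s" by (auto simp: a_def Pt_hom_iff)
      with xh show ?thesis using cat_idr[OF cat] by simp
    qed
    moreover have "(?Z, a, s) \<in> hom (Pt C Y) ?Z a"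
      unfolding a_def Pt_hom_iff using Z a s fs cat_idr[OF cat s] by (simp add: a_def)
    ultimately show "\<exists>!x. x \<in> hom (Pt C Y) ?Z a" by blast
    have "x = (a, ?Z, f)" if x: "x \<in> hom (Pt C Y) a ?Z" for x
    proof -
      obtain h where xh: "x = (a, ?Z, h)" using x by (rule Pt_homE)
      with x have "h \<in> hom C A Y" "Comp C (Idm C Y) h = f" by (auto simp: a_def Pt_hom_iff)
      with xh show ?thesis using cat_idl[OF cat] by simp
    qed
    moreover have "(a, ?Z, f) \<in> hom (Pt C Y) a ?Z"
      unfolding a_def Pt_hom_iff using Z a f fs cat_idl[OF cat f] by (simp add: a_def)
    ultimately show "\<exists>!x. x \<in> hom (Pt C Y) a ?Z" by blast
  qed
  with Z show ?thesis unfolding zero_obj_def initial_def terminal_def by blast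
qed

lemma Pt_zero_mor:
  assumes cat: "is_category C" and a: "(A, f, s) \<in> Ob (Pt C Y)"
  shows "zero_mor (Pt C Y) (A, f, s) (A, f, s) ((A, f, s), (A, f, s), Comp C s f)"
proof -
  let ?Z = "(Y, Idm C Y, Idm C Y)"
  have f: "f \<in> hom C A Y" and s: "s \<in> hom C Y A" and fs: "Comp C f s = Idm C Y"
    using a unfolding Pt_Ob_iff by auto
  have Y: "Y \<in> Ob C" using cat_ob(2)[OF cat f] .
  note Z = Pt_zero_obj[OF cat Y]
  then have "?Z \<in> Ob (Pt C Y)" unfolding zero_obj_def terminal_def by blast
  then have "((A, f, s), ?Z, f) \<in> hom (Pt C Y) (A, f, s) ?Z"
    "(?Z, (A, f, s), s) \<in> hom (Pt C Y) ?Z (A, f, s)"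
    unfolding Pt_hom_iff using a f s fs cat_idl[OF cat f] cat_idr[OF cat s] by auto
  moreover have "((A, f, s), (A, f, s), Comp C s f) =
      Comp (Pt C Y) (?Z, (A, f, s), s) ((A, f, s), ?Z, f)"
    by (simp add: Pt_Comp)
  ultimately show ?thesis using Z unfolding zero_mor_def by blast
qed

lemma Pt_product_kernel_pair:
  assumes cat: "is_category C" and a: "(A, f, s) \<in> Ob (Pt C Y)"
    and pb: "is_pullback C f f P p q"
    and d: "d \<in> hom C Y P" "Comp C p d = s" "Comp C q d = s"
  shows "is_product (Pt C Y) (A, f, s) (A, f, s) (P, Comp C f p, d)
    ((P, Comp C f p, d), (A, f, s), p) ((P, Comp C f p, d), (A, f, s), q)"
proof -
  let ?a = "(A, f, s)" and ?B = "(P, Comp C f p, d)"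
  have f: "f \<in> hom C A Y" and s: "s \<in> hom C Y A" and fs: "Comp C f s = Idm C Y"
    using a unfolding Pt_Ob_iff by auto
  have p: "p \<in> hom C P A" and q: "q \<in> hom C P A" and fpq: "Comp C f p = Comp C f q"
    using pb f unfolding is_pullback_def hom_def by auto
  have "Comp C (Comp C f p) d = Idm C Y"
    using cat_assoc[OF cat d(1) p f] d(2) fs by simp
  then have B: "?B \<in> Ob (Pt C Y)"
    unfolding Pt_Ob_iff using cat_comp[OF cat p f] d(1) by blast
  have kp: "Comp C f (Comp C p k) = Comp C (Comp C f p) k" if "k \<in> hom C Z P" for k Z
    using cat_assoc[OF cat that p f] .
  show ?thesis
    unfolding is_product_def
  proof (intro conjI allI impI)
    show "?B \<in> Ob (Pt C Y)" by (rule B)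
    show "(?B, ?a, p) \<in> hom (Pt C Y) ?B ?a" "(?B, ?a, q) \<in> hom (Pt C Y) ?B ?a"
      unfolding Pt_hom_iff using a B p q fpq d by auto
    fix Z \<alpha>' \<beta>'
    assume "\<alpha>' \<in> hom (Pt C Y) Z ?a \<and> \<beta>' \<in> hom (Pt C Y) Z ?a"
    then have \<alpha>'_hom: "\<alpha>' \<in> hom (Pt C Y) Z ?a" and \<beta>'_hom: "\<beta>' \<in> hom (Pt C Y) Z ?a" by auto
    obtain Z0 fz sz where Z_def: "Z = (Z0, fz, sz)" by (cases Z)
    obtain \<alpha> \<beta> where \<alpha>': "\<alpha>' = (Z, ?a, \<alpha>)" and \<beta>': "\<beta>' = (Z, ?a, \<beta>)"
      using \<alpha>'_hom \<beta>'_hom by (elim Pt_homE)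
    have Z: "Z \<in> Ob (Pt C Y)" and sz: "sz \<in> hom C Y Z0"
      and \<alpha>: "\<alpha> \<in> hom C Z0 A" "Comp C f \<alpha> = fz" "Comp C \<alpha> sz = s"
      and \<beta>: "\<beta> \<in> hom C Z0 A" "Comp C f \<beta> = fz" "Comp C \<beta> sz = s"
      using \<alpha>'_hom \<beta>'_hom unfolding \<alpha>' \<beta>' Z_def Pt_hom_iff Pt_Ob_iff by auto
    have "\<alpha> \<in> hom C Z0 (Dom C f)" "\<beta> \<in> hom C Z0 (Dom C f)" "Comp C f \<alpha> = Comp C f \<beta>"
      using \<alpha> \<beta> f by (auto simp: hom_def)
    then obtain k where k: "k \<in> hom C Z0 P" "Comp C p k = \<alpha>" "Comp C q k = \<beta>"
      using pb unfolding is_pullback_def by blast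
    have "Comp C k sz = d"
    proof (rule pullback_arrow_eq[OF cat pb cat_comp[OF cat sz k(1)] d(1)])
      show "Comp C p (Comp C k sz) = Comp C p d" "Comp C q (Comp C k sz) = Comp C q d"
        using cat_assoc[OF cat sz k(1) p] cat_assoc[OF cat sz k(1) q] k \<alpha>(3) \<beta>(3) d by auto
    qed
    then have k_hom: "(Z, ?B, k) \<in> hom (Pt C Y) Z ?B"
      unfolding Z_def Pt_hom_iff using Z B k(1) kp[OF k(1)] k(2) \<alpha>(2) by (auto simp: Z_def)
    show "\<exists>!h. h \<in> hom (Pt C Y) Z ?B \<and>
        Comp (Pt C Y) (?B, ?a, p) h = \<alpha>' \<and> Comp (Pt C Y) (?B, ?a, q) h = \<beta>'"
    proof (rule ex1I[of _ "(Z, ?B, k)"])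
      show "(Z, ?B, k) \<in> hom (Pt C Y) Z ?B \<and>
          Comp (Pt C Y) (?B, ?a, p) (Z, ?B, k) = \<alpha>' \<and> Comp (Pt C Y) (?B, ?a, q) (Z, ?B, k) = \<beta>'"
        using k_hom k by (simp add: \<alpha>' \<beta>' Pt_Comp)
      fix x
      assume x: "x \<in> hom (Pt C Y) Z ?B \<and>
          Comp (Pt C Y) (?B, ?a, p) x = \<alpha>' \<and> Comp (Pt C Y) (?B, ?a, q) x = \<beta>'"
      then obtain k' where x_def: "x = (Z, ?B, k')" by (blast elim: Pt_homE)
      with x have "k' \<in> hom C Z0 P" "Comp C p k' = \<alpha>" "Comp C q k' = \<beta>"
        by (auto simp: Z_def Pt_hom_iff \<alpha>' \<beta>' Pt_Comp)
      with pullback_arrow_eq[OF cat pb _ k(1)] k show "x = (Z, ?B, k)"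
        by (simp add: x_def)
    qed
  qed
qed

lemma stiffly_unital_Pt_unitary_magma_trivial:
  assumes cat: "is_category C" and su: "stiffly_unital (Pt C Y)"
    and a: "(A, f, s) \<in> Ob (Pt C Y)" and pb: "is_pullback C f f P p q"
    and j1: "j1 \<in> hom C A P" "Comp C p j1 = Idm C A" "Comp C q j1 = Comp C s f"
    and j2: "j2 \<in> hom C A P" "Comp C p j2 = Comp C s f" "Comp C q j2 = Idm C A"
    and \<phi>: "\<phi> \<in> hom C P A" "Comp C f \<phi> = Comp C f p"
      "Comp C \<phi> j1 = Idm C A" "Comp C \<phi> j2 = Idm C A"
  shows "Comp C s f = Idm C A"
proof -
  let ?a = "(A, f, s)" and ?B = "(P, Comp C f p, Comp C j1 s)"
  have f: "f \<in> hom C A Y" and s: "s \<in> hom C Y A" and fs: "Comp C f s = Idm C Y"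
    using a unfolding Pt_Ob_iff by auto
  have p: "p \<in> hom C P A" and q: "q \<in> hom C P A"
    using pb f unfolding is_pullback_def hom_def by auto
  have sfs: "Comp C (Comp C s f) s = s"
    using cat_assoc[OF cat s f s] fs cat_idr[OF cat s] by simp
  have d: "Comp C j1 s \<in> hom C Y P" "Comp C p (Comp C j1 s) = s" "Comp C q (Comp C j1 s) = s"
    using cat_comp[OF cat s j1(1)] cat_assoc[OF cat s j1(1) p] cat_assoc[OF cat s j1(1) q]
      j1 sfs cat_idl[OF cat s] by auto
  have j2s: "Comp C j2 s = Comp C j1 s"
    by (rule pullback_arrow_eq[OF cat pb cat_comp[OF cat s j2(1)] d(1)])
      (use cat_assoc[OF cat s j2(1) p] cat_assoc[OF cat s j2(1) q] j2 sfs d cat_idl[OF cat s] in auto)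
  note prod = Pt_product_kernel_pair[OF cat a pb d]
  then have B: "?B \<in> Ob (Pt C Y)" unfolding is_product_def by blast
  have f_sf: "Comp C f (Comp C s f) = f"
    using cat_assoc[OF cat f s f] fs cat_idl[OF cat f] by simp
  have hom_B: "(?a, ?B, j) \<in> hom (Pt C Y) ?a ?B"
    if "j \<in> hom C A P" "Comp C f (Comp C p j) = f" "Comp C j s = Comp C j1 s" for j
    unfolding Pt_hom_iff using a B that cat_assoc[OF cat that(1) p f] by auto
  have Idm_a: "Idm (Pt C Y) ?a = (?a, ?a, Idm C A)" by (simp add: Pt_Idm)
  note zero = Pt_zero_mor[OF cat a]
  have "is_inj1 (Pt C Y) ?a ?a ?B (?B, ?a, p) (?B, ?a, q) (?a, ?B, j1)"
    unfolding is_inj1_def using hom_B[OF j1(1) _ refl] j1 cat_idr[OF cat f] zero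
    by (simp add: Pt_Comp Idm_a)
  moreover have "is_inj2 (Pt C Y) ?a ?a ?B (?B, ?a, p) (?B, ?a, q) (?a, ?B, j2)"
    unfolding is_inj2_def using hom_B[OF j2(1) _ j2s] j2 f_sf zero by (simp add: Pt_Comp Idm_a)
  moreover have "(?B, ?a, \<phi>) \<in> hom (Pt C Y) ?B ?a"
    unfolding Pt_hom_iff using a B \<phi> cat_assoc[OF cat s j1(1) \<phi>(1)] cat_idl[OF cat s] by simp
  ultimately have "zero_obj (Pt C Y) ?a"
    using stiffly_unital_unitary_magma_zero_obj[OF su prod] \<phi> by (simp add: Pt_Comp Idm_a)
  moreover have "(?a, ?a, Comp C s f) \<in> hom (Pt C Y) ?a ?a"
    unfolding Pt_hom_iff using a cat_comp[OF cat f s] f_sf sfs by simp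
  moreover have "is_category (Pt C Y)"
    using su unfolding stiffly_unital_def unital_def finitely_complete_def by blast
  ultimately show ?thesis
    using terminal_endo_eq_Idm unfolding zero_obj_def by (fastforce simp: Idm_a)
qed

lemma product3_kernel_pair_of_projection:
  assumes cat: "is_category C" and pr: "is_product C X X P p q"
    and pr3: "is_product3 C X P3 p1 p2 p3"
  shows "is_pullback C p p P3 (pair C P p q p1 p2) (pair C P p q p1 p3)"
proof -
  let ?r1 = "pair C P p q p1 p2" and ?r2 = "pair C P p q p1 p3"
  have p: "p \<in> hom C P X" and q: "q \<in> hom C P X" and P: "P \<in> Ob C"
    using pr unfolding is_product_def by auto
  have p1: "p1 \<in> hom C P3 X" and p2: "p2 \<in> hom C P3 X" and p3: "p3 \<in> hom C P3 X"
    and P3: "P3 \<in> Ob C"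
    using pr3 unfolding is_product3_def by auto
  note r1 = pair_props[OF pr p1 p2] and r2 = pair_props[OF pr p1 p3]
  have dom: "Dom C p = P" using p by (simp add: hom_def)
  have comp_r: "Comp C p (Comp C r k) = Comp C (Comp C p r) k"
    "Comp C q (Comp C r k) = Comp C (Comp C q r) k"
    if "k \<in> hom C W P3" "r \<in> hom C P3 P" for k r W
    using cat_assoc[OF cat that p] cat_assoc[OF cat that q] by auto
  show ?thesis
    unfolding is_pullback_def dom
  proof (intro conjI allI impI)
    fix W a b
    assume ab: "a \<in> hom C W P \<and> b \<in> hom C W P \<and> Comp C p a = Comp C p b"
    then have a: "a \<in> hom C W P" and b: "b \<in> hom C W P" and pab: "Comp C p a = Comp C p b"
      by auto
    note pa = cat_comp[OF cat a p] and qa = cat_comp[OF cat a q] and qb = cat_comp[OF cat b q]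
    let ?k = "tuple3 C P3 p1 p2 p3 (Comp C p a) (Comp C q a) (Comp C q b)"
    note k = tuple3_props[OF pr3 pa qa qb]
    have uniq: "h = ?k" if h: "h \<in> hom C W P3" "Comp C ?r1 h = a" "Comp C ?r2 h = b" for h
    proof -
      have "Comp C p1 h = Comp C p a" "Comp C p2 h = Comp C q a" "Comp C p3 h = Comp C q b"
        using comp_r[OF h(1) r1(1)] comp_r[OF h(1) r2(1)] r1(2,3) r2(3) h(2,3) by auto
      then show ?thesis using tuple3_unique[OF cat pr3 h(1)] by simp
    qed
    have "Comp C ?r1 ?k = pair C P p q (Comp C p a) (Comp C q a)"
      using pair_comp[OF cat pr p1 p2 k(1)] k by simp
    also have "\<dots> = a" by (rule pair_unique[OF cat pr a refl refl])
    finally have "Comp C ?r1 ?k = a" .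
    moreover have "Comp C ?r2 ?k = pair C P p q (Comp C p b) (Comp C q b)"
      using pair_comp[OF cat pr p1 p3 k(1)] k pab by simp
    moreover have "\<dots> = b" by (rule pair_unique[OF cat pr b refl refl])
    ultimately have "Comp C ?r1 ?k = a \<and> Comp C ?r2 ?k = b" by simp
    then show "\<exists>!h. h \<in> hom C W P3 \<and> Comp C ?r1 h = a \<and> Comp C ?r2 h = b"
      using k(1) uniq by (intro ex1I[of _ ?k]) blast+
  qed (use p P3 r1 r2 in \<open>simp_all add: hom_def\<close>)
qed

lemma stiffly_maltsev_maltsev_object_subterminal:
  assumes sm: "stiffly_maltsev C" and T: "terminal C T" and X: "X \<in> Ob C"
    and M: "has_internal_maltsev C X" and t: "t \<in> hom C X T"
  shows "mono C t"
proof -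
  have fc: "finitely_complete C" and su: "stiffly_unital (Pt C X)"
    using sm X unfolding stiffly_maltsev_def maltsev_def by auto
  then have cat: "is_category C" unfolding finitely_complete_def by blast
  obtain P3 p1 p2 p3 m where pr3: "is_product3 C X P3 p1 p2 p3" and m: "m \<in> hom C P3 X"
    and mx: "\<And>W x y. x \<in> hom C W X \<Longrightarrow> y \<in> hom C W X \<Longrightarrow>
      Comp C m (tuple3 C P3 p1 p2 p3 x y y) = x \<and> Comp C m (tuple3 C P3 p1 p2 p3 y y x) = x"
    using M unfolding has_internal_maltsev_def by blast
  obtain P p q where pb: "is_pullback C t t P p q"
    using fc t unfolding finitely_complete_def hom_def by blast
  then have pr: "is_product C X X P p q"
    using pullback_over_terminal_iff_product[OF cat T t t] by simp
  then have p: "p \<in> hom C P X" and q: "q \<in> hom C P X"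
    unfolding is_product_def by auto
  have p1: "p1 \<in> hom C P3 X" and p2: "p2 \<in> hom C P3 X" and p3: "p3 \<in> hom C P3 X"
    using pr3 unfolding is_product3_def by auto
  have idX: "Idm C X \<in> hom C X X" by (rule cat_id[OF cat X])
  define \<Delta> where "\<Delta> = pair C P p q (Idm C X) (Idm C X)"
  note \<Delta> = pair_props[OF pr idX idX, folded \<Delta>_def]
  have \<Delta>p: "Comp C \<Delta> p = pair C P p q p p"
    using pair_comp[OF cat pr idX idX p] cat_idl[OF cat p] unfolding \<Delta>_def by simp
  have a: "(P, p, \<Delta>) \<in> Ob (Pt C X)" unfolding Pt_Ob_iff using p \<Delta> by simp
  define j1 where "j1 = tuple3 C P3 p1 p2 p3 p q p"
  define j2 where "j2 = tuple3 C P3 p1 p2 p3 p p q"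
  note j1 = tuple3_props[OF pr3 p q p, folded j1_def]
    and j2 = tuple3_props[OF pr3 p p q, folded j2_def]
  define \<phi> where "\<phi> = pair C P p q p1 (Comp C m (tuple3 C P3 p1 p2 p3 p2 p1 p3))"
  have m\<tau>: "Comp C m (tuple3 C P3 p1 p2 p3 p2 p1 p3) \<in> hom C P3 X"
    using cat_comp[OF cat tuple3_props(1)[OF pr3 p2 p1 p3] m] .
  note \<phi> = pair_props[OF pr p1 m\<tau>, folded \<phi>_def]
  have \<phi>_comp: "Comp C \<phi> j = pair C P p q (Comp C p1 j)
      (Comp C m (tuple3 C P3 p1 p2 p3 (Comp C p2 j) (Comp C p1 j) (Comp C p3 j)))"
    if j: "j \<in> hom C P P3" for j
    using pair_comp[OF cat pr p1 m\<tau> j] cat_assoc[OF cat j tuple3_props(1)[OF pr3 p2 p1 p3] m]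
      tuple3_comp[OF cat pr3 p2 p1 p3 j] unfolding \<phi>_def by simp
  have "Comp C \<Delta> p = Idm C P"
  proof (rule stiffly_unital_Pt_unitary_magma_trivial
      [OF cat su a product3_kernel_pair_of_projection[OF cat pr pr3] j1(1) _ _ j2(1) _ _ \<phi>(1)])
    show "Comp C (pair C P p q p1 p2) j1 = Idm C P" "Comp C (pair C P p q p1 p3) j2 = Idm C P"
      using pair_comp[OF cat pr p1 p2 j1(1)] pair_comp[OF cat pr p1 p3 j2(1)] j1 j2
        pair_proj[OF cat pr] by simp_all
    show "Comp C (pair C P p q p1 p3) j1 = Comp C \<Delta> p"
      "Comp C (pair C P p q p1 p2) j2 = Comp C \<Delta> p"
      using pair_comp[OF cat pr p1 p3 j1(1)] pair_comp[OF cat pr p1 p2 j2(1)] j1 j2 \<Delta>p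
      by simp_all
    show "Comp C p \<phi> = Comp C p (pair C P p q p1 p2)"
      using \<phi> pair_props[OF pr p1 p2] by simp
    show "Comp C \<phi> j1 = Idm C P" "Comp C \<phi> j2 = Idm C P"
      using \<phi>_comp[OF j1(1)] \<phi>_comp[OF j2(1)] j1 j2 mx[OF q p] pair_proj[OF cat pr]
      by simp_all
  qed
  then have "q = p"
    using cat_assoc[OF cat p \<Delta>(1) q] \<Delta>(3) cat_idr[OF cat q] cat_idl[OF cat p] by simp
  with pb show ?thesis by (intro mono_if_kernel_pair_projections_eq) simp
qed

lemma stiffly_maltsev_group_object_terminal:
  assumes sm: "stiffly_maltsev C" and T: "terminal C T" and X: "X \<in> Ob C"
    and G: "has_internal_group C X"
  shows "isomorphic C X T"
proof -
  have fc: "finitely_complete C" and T_Ob: "T \<in> Ob C"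
    using sm T unfolding stiffly_maltsev_def maltsev_def terminal_def by auto
  then have cat: "is_category C" and su: "stiffly_unital (Pt C T)"
    using sm unfolding finitely_complete_def stiffly_maltsev_def by auto
  obtain P p q m one e i where pr: "is_product C X X P p q" and one: "terminal C one"
    and m: "m \<in> hom C P X" and e: "e \<in> hom C one X"
    and unit_r: "\<And>W x. x \<in> hom C W X \<Longrightarrow>
      Comp C m (pair C P p q x (Comp C e (THE u. u \<in> hom C W one))) = x"
    and unit_l: "\<And>W x. x \<in> hom C W X \<Longrightarrow>
      Comp C m (pair C P p q (Comp C e (THE u. u \<in> hom C W one)) x) = x"
    using G unfolding has_internal_group_def Let_def by metis
  have p: "p \<in> hom C P X" using pr unfolding is_product_def by auto
  obtain t where t: "t \<in> hom C X T" using terminal_ex[OF T X] .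
  obtain v where v: "v \<in> hom C T one" using terminal_ex[OF one T_Ob] .
  define e' where "e' = Comp C e v"
  have e': "e' \<in> hom C T X" unfolding e'_def by (rule cat_comp[OF cat v e])
  have te': "Comp C t e' = Idm C T"
    by (rule terminal_uniq[OF cat T cat_comp[OF cat e' t] cat_id[OF cat T_Ob]])
  have "(THE u. u \<in> hom C X one) = Comp C v t"
    using terminal_uniq[OF cat one] cat_comp[OF cat t v] by blast
  then have unit_X: "Comp C e (THE u. u \<in> hom C X one) = Comp C e' t"
    unfolding e'_def using cat_assoc[OF cat t v e] by simp
  have idX: "Idm C X \<in> hom C X X" by (rule cat_id[OF cat X])
  have E: "Comp C e' t \<in> hom C X X" by (rule cat_comp[OF cat t e'])
  have "Comp C e' t = Idm C X"
  proof (rule stiffly_unital_Pt_unitary_magma_trivial[OF cat su _ _ _ _ _ _ _ _ m])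
    show "(X, t, e') \<in> Ob (Pt C T)" unfolding Pt_Ob_iff using t e' te' by simp
    show "is_pullback C t t P p q"
      using pr pullback_over_terminal_iff_product[OF cat T t t] by simp
    show "Comp C t m = Comp C t p"
      by (rule terminal_uniq[OF cat T cat_comp[OF cat m t] cat_comp[OF cat p t]])
    show "Comp C m (pair C P p q (Idm C X) (Comp C e' t)) = Idm C X"
      "Comp C m (pair C P p q (Comp C e' t) (Idm C X)) = Idm C X"
      using unit_r[OF idX] unit_l[OF idX] unit_X by simp_all
  qed (use pair_props[OF pr idX E] pair_props[OF pr E idX] in simp_all)
  with te' show ?thesis
    using t e' unfolding isomorphic_def iso_def hom_def by auto
qed

theorem mainTheorem5:
  fixes C :: "('o, 'a) cat"
  assumes "stiffly_maltsev C"
  shows "(\<forall>X \<in> Ob C. has_internal_maltsev C X \<longrightarrow>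
            (\<forall>T t. terminal C T \<and> t \<in> hom C X T \<longrightarrow> mono C t))
       \<and> (\<forall>X \<in> Ob C. has_internal_group C X \<longrightarrow>
            (\<forall>T. terminal C T \<longrightarrow> isomorphic C X T))"
  using stiffly_maltsev_maltsev_object_subterminal[OF assms]
    stiffly_maltsev_group_object_terminal[OF assms] by blast

end
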